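(* Let $(\Omega,\mathcal F)$ be a measurable space with $\Sigma\neq\emptyset$, and let $v:\mathcal F\to\mathbb R$ be a non-decreasing continuous set function with $v(\emptyset)=0$. Let $f_n:\Omega\to\mathbb R$ ($n\in\mathbb N$) and $f:\Omega\to\mathbb R$ be measurable and Choquet integrable with respect to $v$, such that $f_n$ is pointwise non-decreasing in $n$ and $f=\lim_n f_n$ $v$-almost surely. Then $\lim_{n\to\infty}v(f_n)=v(f)$.
   Context: $\Sigma$ denotes the set of all classes $\mathcal I\subset\mathcal F$ that are chains (totally ordered by inclusion), contain $\emptyset$ and $\Omega$, and generate $\mathcal F$ as a $\sigma$-algebra. $v$ is non-decreasing if $v(A)\le v(B)$ for $A\subset B$. For $\mathcal I\in\Sigma$ let $\mathcal J$ be the algebra generated by $\mathcal I$, whose elements are the sets $\bigcup_{i=1}^n (C_i\cap D_i^c)$ with $C_1\supset D_1\supset\cdots\supset C_n\supset D_n$ in $\mathcal I$; define $\mu_{v,\mathcal I}(\bigcup_{i=1}^n (C_i\cap D_i^c))=\sum_{i=1}^n(v(C_i)-v(D_i))$. $v$ is continuous if for every $\mathcal I\in\Sigma$ this $\mu_{v,\mathcal I}$ is $\sigma$-additive on $\mathcal J$. The Choquet integral of a measurable $f$ is $v(f)=\lim_{y\to-\infty}\big(y\,v(\Omega)+\int_y^\infty v(\{\omega: f(\omega)>z\})\,dz\big)$ (Lebesgue integral), and $f$ is Choquet integrable if this is a well-defined real number. A set $N\in\mathcal F$ is $v$-null if $v(N\cup A)=v(N^c\cap A)=v(A)$ for all $A\in\mathcal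 F$; $f=\lim f_n$ $v$-almost surely means there is a $v$-null $N$ with $\lim f_n(\omega)=f(\omega)$ for all $\omega\in N^c$. *)

theory Defs
  imports "HOL-Analysis.Analysis"
begin

definition chain_gens :: "'a measure \<Rightarrow> 'a set set set" where
  "chain_gens M = {I. I \<subseteq> sets M \<and> (\<forall>A\<in>I. \<forall>B\<in>I. A \<subseteq> B \<or> B \<subseteq> A)
      \<and> {} \<in> I \<and> space M \<in> I \<and> sigma_sets (space M) I = sets M}"

definition chain_rep :: "'a set set \<Rightarrow> 'a set \<Rightarrow> nat \<Rightarrow> (nat \<Rightarrow> 'a set) \<Rightarrow> (nat \<Rightarrow> 'a set) \<Rightarrow> bool" where
  "chain_rep I A n C D \<longleftrightarrow>
     (\<forall>i<n. C i \<in> I \<and> D i \<in> I \<and> D i \<subseteq> C i) \<and>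
     (\<forall>i. Suc i < n \<longrightarrow> C (Suc i) \<subseteq> D i) \<and>
     A = (\<Union>i<n. C i - D i)"

definition chain_alg :: "'a set set \<Rightarrow> 'a set set" where
  "chain_alg I = {A. \<exists>n C D. chain_rep I A n C D}"

definition mu_chain :: "('a set \<Rightarrow> real) \<Rightarrow> 'a set set \<Rightarrow> 'a set \<Rightarrow> real" where
  "mu_chain v I A = (SOME x. \<exists>n C D. chain_rep I A n C D \<and> x = (\<Sum>i<n. v (C i) - v (D i)))"

definition nondecreasing_sf :: "'a measure \<Rightarrow> ('a set \<Rightarrow> real) \<Rightarrow> bool" where
  "nondecreasing_sf M v \<longleftrightarrow> (\<forall>A\<in>sets M. \<forall>B\<in>sets M. A \<subseteq> B \<longrightarrow> v A \<le> v B)"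

definition continuous_sf :: "'a measure \<Rightarrow> ('a set \<Rightarrow> real) \<Rightarrow> bool" where
  "continuous_sf M v \<longleftrightarrow> (\<forall>I\<in>chain_gens M. \<forall>A :: nat \<Rightarrow> 'a set.
      range A \<subseteq> chain_alg I \<longrightarrow> disjoint_family A \<longrightarrow> (\<Union>k. A k) \<in> chain_alg I \<longrightarrow>
      (\<lambda>k. mu_chain v I (A k)) sums mu_chain v I (\<Union>k. A k))"

definition choquet_aux :: "'a measure \<Rightarrow> ('a set \<Rightarrow> real) \<Rightarrow> ('a \<Rightarrow> real) \<Rightarrow> real \<Rightarrow> real" where
  "choquet_aux M v f y = y * v (space M) + (LBINT z:{y..}. v {\<omega>\<in>space M. f \<omega> > z})"

definition choquet_integrable :: "'a measure \<Rightarrow> ('a set \<Rightarrow> real) \<Rightarrow> ('a \<Rightarrow> real) \<Rightarrow> bool" where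
  "choquet_integrable M v f \<longleftrightarrow>
     (\<forall>y. set_integrable lborel {y..} (\<lambda>z. v {\<omega>\<in>space M. f \<omega> > z})) \<and>
     (\<exists>c. (choquet_aux M v f \<longlongrightarrow> c) at_bot)"

definition choquet :: "'a measure \<Rightarrow> ('a set \<Rightarrow> real) \<Rightarrow> ('a \<Rightarrow> real) \<Rightarrow> real" where
  "choquet M v f = Lim at_bot (choquet_aux M v f)"

definition v_null :: "'a measure \<Rightarrow> ('a set \<Rightarrow> real) \<Rightarrow> 'a set \<Rightarrow> bool" where
  "v_null M v N \<longleftrightarrow> N \<in> sets M \<and>
     (\<forall>A\<in>sets M. v (N \<union> A) = v A \<and> v ((space M - N) \<inter> A) = v A)"

end

theory Submission
  imports Defs
begin

text \<open>Write G g z = v {g > z}, so that v(g) is the limit as y \<rightarrow> -\<infinity> of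
  y v(\<Omega>) plus the integral of G g over [y, \<infinity>). Continuity of v gives continuity from below
  along increasing measurable sets A k: these can be threaded into a generating chain, and
  \<sigma>-additivity of mu_chain on the rings A (k+1) - A k telescopes. As v-null sets do not change v,
  G (f n) z increases to G f z for every z, so for each fixed y the truncated integrals converge by
  dominated convergence. The limits n \<rightarrow> \<infinity> and y \<rightarrow> -\<infinity> are then interchanged using
  monotonicity in both variables.\<close>

section \<open>The measure induced on the algebra of a chain\<close>

lemma chain_rep_nested:
  assumes "chain_rep I S n C D" "i < m" "m < n"
  shows "C m \<subseteq> D i"
  using assms(2,3)
proof (induction m)
  case 0
  then show ?case by simp
next
  case (Suc m)
  have "C (Suc m) \<subseteq> D m" "D m \<subseteq> C m"
    using assms(1) Suc.prems by (auto simp: chain_rep_def)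
  then show ?case
    using Suc by (cases "i = m") auto
qed

lemma chain_rep_sum_eq_diff:
  fixes v :: "'a set \<Rightarrow> real"
  assumes chain: "\<forall>A\<in>I. \<forall>B\<in>I. A \<subseteq> B \<or> B \<subseteq> A"
  shows "chain_rep I (X - Y) n C D \<Longrightarrow> X \<in> I \<Longrightarrow> Y \<in> I \<Longrightarrow> Y \<subseteq> X
    \<Longrightarrow> (\<Sum>i<n. v (C i) - v (D i)) = v X - v Y"
proof (induction n arbitrary: X Y)
  case 0
  then have "X = Y" by (auto simp: chain_rep_def)
  then show ?case by simp
next
  case (Suc n)
  define S where "S = (\<Union>i<n. C i - D i)"
  have rep: "chain_rep I S n C D"
    using Suc.prems(1) by (auto simp: chain_rep_def S_def)
  have ring: "C n \<in> I" "D n \<in> I" "D n \<subseteq> C n"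
    using Suc.prems(1) by (auto simp: chain_rep_def)
  have XY: "X - Y = S \<union> (C n - D n)"
    using Suc.prems(1) by (auto simp: chain_rep_def S_def lessThan_Suc)
  have disj: "S \<inter> C n = {}"
    using chain_rep_nested[OF Suc.prems(1)] by (auto simp: S_def)
  show ?case
  proof (cases "C n = D n")
    case True
    then have "S = X - Y" using XY by simp
    then show ?thesis
      using Suc.IH[OF _ Suc.prems(2-4)] rep True by simp
  next
    case False
    \<comment> \<open>The innermost ring C n - D n is nonempty, so comparability in the chain forces D n = Y.\<close>
    then obtain p where p: "p \<in> C n" "p \<notin> D n" using ring(3) by blast
    have "p \<in> X" "p \<notin> Y" using p XY by auto
    then have DX: "D n \<subseteq> X" and YC: "Y \<subseteq> C n"
      using chain ring(1,2) Suc.prems(2,3) p by blast+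
    have "D n = Y"
      using XY disj YC DX ring(3) by blast
    moreover have CX: "C n \<subseteq> X"
      using XY DX by blast
    moreover have "S = X - C n"
      using XY disj ring(3) CX \<open>D n = Y\<close> by blast
    ultimately show ?thesis
      using Suc.IH[OF _ Suc.prems(2) ring(1) CX] rep by simp
  qed
qed

lemma Diff_in_chain_alg:
  assumes "X \<in> I" "Y \<in> I" "Y \<subseteq> X"
  shows "chain_rep I (X - Y) 1 (\<lambda>_. X) (\<lambda>_. Y)" "X - Y \<in> chain_alg I"
proof -
  show "chain_rep I (X - Y) 1 (\<lambda>_. X) (\<lambda>_. Y)"
    using assms by (auto simp: chain_rep_def lessThan_Suc)
  then show "X - Y \<in> chain_alg I"
    unfolding chain_alg_def by blast
qed

lemma mu_chain_Diff:
  fixes v :: "'a set \<Rightarrow> real"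
  assumes chain: "\<forall>A\<in>I. \<forall>B\<in>I. A \<subseteq> B \<or> B \<subseteq> A"
    and XY: "X \<in> I" "Y \<in> I" "Y \<subseteq> X"
  shows "mu_chain v I (X - Y) = v X - v Y"
  unfolding mu_chain_def
proof (rule someI2_ex)
  show "\<exists>x n C D. chain_rep I (X - Y) n C D \<and> x = (\<Sum>i<n. v (C i) - v (D i))"
    using Diff_in_chain_alg(1)[OF XY] by fastforce
next
  fix x
  assume "\<exists>n C D. chain_rep I (X - Y) n C D \<and> x = (\<Sum>i<n. v (C i) - v (D i))"
  then show "x = v X - v Y"
    using chain_rep_sum_eq_diff[OF chain] XY by blast
qed

section \<open>Continuity from below\<close>

text \<open>The chain I copied into every gap of {} \<subseteq> A 0 \<subseteq> A 1 \<subseteq> ... \<subseteq> (\<Union>k. A k).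
  For increasing A it is again a generating chain, and it contains every A k.\<close>
definition interleave_chain :: "'a set set \<Rightarrow> (nat \<Rightarrow> 'a set) \<Rightarrow> 'a set set" where
  "interleave_chain I A =
     (\<Union>k. (\<lambda>B. case_nat {} A k \<union> (A k \<inter> B)) ` I) \<union> (\<lambda>B. (\<Union>k. A k) \<union> B) ` I"

lemma interleave_chain_memI:
  assumes "{} \<in> I"
  shows "case_nat {} A k \<in> interleave_chain I A" "(\<Union>k. A k) \<in> interleave_chain I A"
proof -
  have "case_nat {} A k \<union> (A k \<inter> {}) \<in> interleave_chain I A"
    "(\<Union>k. A k) \<union> {} \<in> interleave_chain I A"
    using assms unfolding interleave_chain_def by blast+
  then show "case_nat {} A k \<in> interleave_chain I A" "(\<Union>k. A k) \<in> interleave_chain I A"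
    by simp_all
qed

lemma interleave_chain_is_chain:
  assumes chain: "\<forall>B\<in>I. \<forall>B'\<in>I. B \<subseteq> B' \<or> B' \<subseteq> B" and inc: "incseq A"
  shows "\<forall>X\<in>interleave_chain I A. \<forall>Y\<in>interleave_chain I A. X \<subseteq> Y \<or> Y \<subseteq> X"
proof -
  have below: "case_nat {} A k \<subseteq> A k" for k
    using inc by (cases k) (auto dest: incseq_SucD)
  have above: "A k \<subseteq> case_nat {} A j" if "k < j" for k j
    using that inc by (cases j) (auto simp: incseq_def)
  have layers: "case_nat {} A k \<union> (A k \<inter> B) \<subseteq> case_nat {} A j \<union> (A j \<inter> B')"
    if "k < j" for k j B B'
    using below[of k] above[OF that] by blast
  have layer_pair: "case_nat {} A k \<union> (A k \<inter> B) \<subseteq> case_nat {} A j \<union> (A j \<inter> B') \<or>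
      case_nat {} A j \<union> (A j \<inter> B') \<subseteq> case_nat {} A k \<union> (A k \<inter> B)"
    if "B \<in> I" "B' \<in> I" for k j B B'
  proof (cases k j rule: linorder_cases)
    case equal
    then show ?thesis using chain that by blast
  qed (use layers in blast)+
  have below_top: "case_nat {} A k \<union> (A k \<inter> B) \<subseteq> (\<Union>k. A k) \<union> B'" for k B B'
    using below[of k] by blast
  have top_pair: "(\<Union>k. A k) \<union> B \<subseteq> (\<Union>k. A k) \<union> B' \<or> (\<Union>k. A k) \<union> B' \<subseteq> (\<Union>k. A k) \<union> B"
    if "B \<in> I" "B' \<in> I" for B B'
    using chain that by blast
  show ?thesis
    unfolding interleave_chain_def
    by (intro ballI, elim UnE UN_E imageE) (simp_all only: layer_pair below_top top_pair simp_thms)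
qed

lemma sigma_sets_interleave_chain:
  assumes J: "interleave_chain I A \<subseteq> Pow \<Omega>" and "{} \<in> I" "B \<in> I"
  shows "B \<in> sigma_sets \<Omega> (interleave_chain I A)"
proof -
  interpret S: sigma_algebra \<Omega> "sigma_sets \<Omega> (interleave_chain I A)"
    using sigma_algebra_sigma_sets[OF J] .
  have first_entry: "\<exists>k. x \<in> A k - case_nat {} A k" if "x \<in> A j" for x j
  proof -
    define k where "k = (LEAST k. x \<in> A k)"
    have "x \<in> A k"
      unfolding k_def using that by (rule LeastI)
    moreover have "x \<notin> A i" if "i < k" for i
      using not_less_Least that unfolding k_def by blast
    ultimately have "x \<in> A k - case_nat {} A k"
      by (cases k) auto
    then show ?thesis ..
  qed
  let ?U = "\<Union>k. A k"
  have "B = (\<Union>k. (case_nat {} A k \<union> (A k \<inter> B)) - case_nat {} A k) \<union> ((?U \<union> B) - ?U)"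
  proof (intro equalityI subsetI)
    fix x
    assume "x \<in> B"
    then show "x \<in> (\<Union>k. (case_nat {} A k \<union> (A k \<inter> B)) - case_nat {} A k) \<union> ((?U \<union> B) - ?U)"
      using first_entry by (cases "x \<in> ?U") auto
  qed auto
  also have "\<dots> \<in> sigma_sets \<Omega> (interleave_chain I A)"
  proof -
    have "case_nat {} A k \<union> (A k \<inter> B) \<in> interleave_chain I A" "?U \<union> B \<in> interleave_chain I A" for k
      using assms(3) unfolding interleave_chain_def by blast+
    then show ?thesis
      using interleave_chain_memI[OF assms(2)] by (intro S.Un S.countable_UN S.Diff sigma_sets.Basic) auto
  qed
  finally show ?thesis .
qed

lemma interleave_chain_in_chain_gens:
  assumes I: "I \<in> chain_gens M" and A: "range A \<subseteq> sets M" and inc: "incseq A"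
  shows "interleave_chain I A \<in> chain_gens M"
proof -
  have I_sets: "I \<subseteq> sets M" and "{} \<in> I" "space M \<in> I"
    and gen: "sigma_sets (space M) I = sets M"
    and chain: "\<forall>B\<in>I. \<forall>B'\<in>I. B \<subseteq> B' \<or> B' \<subseteq> B"
    using I by (auto simp: chain_gens_def)
  have J_sets: "interleave_chain I A \<subseteq> sets M"
    using I_sets A unfolding interleave_chain_def by (auto split: nat.split)
  have "sigma_sets (space M) (interleave_chain I A) = sets M"
  proof
    show "sigma_sets (space M) (interleave_chain I A) \<subseteq> sets M"
      using sets.sigma_sets_subset[OF J_sets] .
    have "I \<subseteq> sigma_sets (space M) (interleave_chain I A)"
      using J_sets sets.sets_into_space \<open>{} \<in> I\<close>
      by (auto intro!: sigma_sets_interleave_chain)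
    then show "sets M \<subseteq> sigma_sets (space M) (interleave_chain I A)"
      using gen sigma_sets_mono by blast
  qed
  moreover have "space M \<in> interleave_chain I A"
  proof -
    have "space M = (\<Union>k. A k) \<union> space M"
      using A sets.sets_into_space by blast
    then show ?thesis
      using \<open>space M \<in> I\<close> unfolding interleave_chain_def by blast
  qed
  moreover have "{} \<in> interleave_chain I A"
    using interleave_chain_memI(1)[OF \<open>{} \<in> I\<close>, of A 0] by simp
  ultimately show ?thesis
    using J_sets interleave_chain_is_chain[OF chain inc] by (simp add: chain_gens_def)
qed

lemma continuous_sf_incseq:
  assumes "chain_gens M \<noteq> {}" and cont: "continuous_sf M v" and "v {} = 0"
    and A: "range A \<subseteq> sets M" and inc: "incseq A"
  shows "(\<lambda>n. v (A n)) \<longlonglongrightarrow> v (\<Union>n. A n)"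
proof -
  obtain I0 where "I0 \<in> chain_gens M" using assms(1) by blast
  define I where "I = interleave_chain I0 A"
  have I: "I \<in> chain_gens M"
    unfolding I_def by (rule interleave_chain_in_chain_gens) fact+
  then have chain: "\<forall>X\<in>I. \<forall>Y\<in>I. X \<subseteq> Y \<or> Y \<subseteq> X" and "{} \<in> I"
    by (auto simp: chain_gens_def)
  have "{} \<in> I0" using \<open>I0 \<in> chain_gens M\<close> by (simp add: chain_gens_def)
  note mem = interleave_chain_memI[OF this, of A, folded I_def]
  have below: "case_nat {} A k \<subseteq> case_nat {} A (Suc k)" for k
    using inc by (cases k) (auto dest: incseq_SucD)
  have ring: "disjointed A k = case_nat {} A (Suc k) - case_nat {} A k" for k
    using inc by (cases k) (simp_all add: disjointed_mono mono_def)
  have "range (disjointed A) \<subseteq> chain_alg I"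
    using Diff_in_chain_alg(2)[OF mem(1) mem(1) below] by (auto simp: ring)
  moreover have "(\<Union>k. disjointed A k) \<in> chain_alg I"
    using Diff_in_chain_alg(2)[OF mem(2) \<open>{} \<in> I\<close>] by (simp add: UN_disjointed_eq)
  ultimately have "(\<lambda>k. mu_chain v I (disjointed A k)) sums mu_chain v I (\<Union>k. disjointed A k)"
    using cont I disjoint_family_disjointed unfolding continuous_sf_def by blast
  moreover have "mu_chain v I (disjointed A k) = v (case_nat {} A (Suc k)) - v (case_nat {} A k)" for k
    unfolding ring by (rule mu_chain_Diff[OF chain mem(1) mem(1) below])
  moreover have "mu_chain v I (\<Union>k. disjointed A k) = v (\<Union>k. A k)"
    using mu_chain_Diff[OF chain mem(2) \<open>{} \<in> I\<close>] \<open>v {} = 0\<close> by (simp add: UN_disjointed_eq)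
  moreover have "(\<Sum>k<n. v (A k) - v (case_nat {} A k)) = v (case_nat {} A n)" for n
    using sum_lessThan_telescope[of "\<lambda>k. v (case_nat {} A k)" n] by (simp add: \<open>v {} = 0\<close>)
  ultimately have "(\<lambda>n. v (case_nat {} A n)) \<longlonglongrightarrow> v (\<Union>k. A k)"
    by (simp add: sums_def)
  then show ?thesis
    using LIMSEQ_Suc by fastforce
qed

section \<open>Monotone convergence and interchange of limits\<close>

lemma set_integral_mono_set:
  fixes h :: "'a \<Rightarrow> real"
  assumes "set_integrable M A h" "set_integrable M B h" "A \<subseteq> B"
    and "\<And>x. x \<in> B \<Longrightarrow> 0 \<le> h x"
  shows "(LINT x:A|M. h x) \<le> (LINT x:B|M. h x)"
  using assms unfolding set_integrable_def set_lebesgue_integral_def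
  by (intro integral_mono) (auto split: split_indicator)

lemma set_integral_incseq_tendsto:
  fixes g :: "nat \<Rightarrow> 'a \<Rightarrow> real"
  assumes int: "\<And>n. set_integrable M S (g n)" "set_integrable M S h"
    and inc: "\<And>x. x \<in> S \<Longrightarrow> incseq (\<lambda>n. g n x)"
    and lim: "\<And>x. x \<in> S \<Longrightarrow> (\<lambda>n. g n x) \<longlonglongrightarrow> h x"
  shows "(\<lambda>n. LINT x:S|M. g n x) \<longlonglongrightarrow> (LINT x:S|M. h x)"
  unfolding set_lebesgue_integral_def
proof (rule integral_dominated_convergence[where w="\<lambda>x. indicator S x *\<^sub>R (\<bar>g 0 x\<bar> + \<bar>h x\<bar>)"])
  show "(\<lambda>x. indicator S x *\<^sub>R h x) \<in> borel_measurable M"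
    "\<And>n. (\<lambda>x. indicator S x *\<^sub>R g n x) \<in> borel_measurable M"
    using int unfolding set_integrable_def by auto
  have "set_integrable M S (\<lambda>x. \<bar>g 0 x\<bar> + \<bar>h x\<bar>)"
    using int by (intro set_integral_add(1) set_integrable_abs)
  then show "integrable M (\<lambda>x. indicator S x *\<^sub>R (\<bar>g 0 x\<bar> + \<bar>h x\<bar>))"
    unfolding set_integrable_def .
  show "AE x in M. (\<lambda>n. indicator S x *\<^sub>R g n x) \<longlonglongrightarrow> indicator S x *\<^sub>R h x"
    using lim by (intro AE_I2) (auto split: split_indicator)
  have "\<bar>g n x\<bar> \<le> \<bar>g 0 x\<bar> + \<bar>h x\<bar>" if "x \<in> S" for n x
    using incseq_le[OF inc lim, OF that that, of n] inc[OF that] unfolding incseq_def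
    by (smt (verit) le0)
  then show "AE x in M. norm (indicator S x *\<^sub>R g n x) \<le> indicator S x *\<^sub>R (\<bar>g 0 x\<bar> + \<bar>h x\<bar>)" for n
    by (intro AE_I2) (auto split: split_indicator)
qed

text \<open>The upper bound comes from F n \<le> G. For the lower bound, the gap F n - F 0 only grows
  towards -\<infinity>, so L n - L 0 \<ge> F n y - F 0 y, and the right-hand side tends to G y - F 0 y.\<close>
lemma LIMSEQ_of_at_bot_limits:
  fixes F :: "nat \<Rightarrow> real \<Rightarrow> real" and G :: "real \<Rightarrow> real"
  assumes F: "\<And>n. (F n \<longlongrightarrow> L n) at_bot" and G: "(G \<longlongrightarrow> L') at_bot"
    and le: "\<And>n y. F n y \<le> G y"
    and gap: "\<And>n y y'. y' \<le> y \<Longrightarrow> F n y - F 0 y \<le> F n y' - F 0 y'"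
    and lim: "\<And>y. (\<lambda>n. F n y) \<longlonglongrightarrow> G y"
  shows "L \<longlonglongrightarrow> L'"
proof (rule order_tendstoI)
  fix a
  assume "L' < a"
  have "L n \<le> L'" for n
    by (rule tendsto_le[OF trivial_limit_at_bot_linorder G F]) (simp add: le)
  then have "L n < a" for n
    using \<open>L' < a\<close> by (rule le_less_trans)
  then show "eventually (\<lambda>n. L n < a) sequentially"
    by simp
next
  fix a
  assume "a < L'"
  have gap_le: "F n y - F 0 y \<le> L n - L 0" for n y
    by (rule tendsto_lowerbound[OF tendsto_diff[OF F F] _ trivial_limit_at_bot_linorder])
      (auto simp: eventually_at_bot_linorder intro!: exI[of _ y] gap)
  have "((\<lambda>t. G t - F 0 t) \<longlongrightarrow> L' - L 0) at_bot"
    using G F by (rule tendsto_diff)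
  moreover have "L' - L 0 - (L' - a) / 2 < L' - L 0"
    using \<open>a < L'\<close> by simp
  ultimately have "eventually (\<lambda>t. L' - L 0 - (L' - a) / 2 < G t - F 0 t) at_bot"
    by (rule order_tendstoD(1))
  then obtain y where y: "L' - L 0 - (L' - a) / 2 < G y - F 0 y"
    unfolding eventually_at_bot_linorder by auto
  have "G y - (L' - a) / 2 < G y"
    using \<open>a < L'\<close> by simp
  with lim have "eventually (\<lambda>n. G y - (L' - a) / 2 < F n y) sequentially"
    by (rule order_tendstoD(1))
  then show "eventually (\<lambda>n. a < L n) sequentially"
  proof eventually_elim
    case (elim n)
    then show ?case using gap_le[of n y] y by (simp add: field_simps)
  qed
qed

section \<open>Survival functions and truncated Choquet integrals\<close>

definition survival_fun :: "'a measure \<Rightarrow> ('a set \<Rightarrow> real) \<Rightarrow> ('a \<Rightarrow> real) \<Rightarrow> real \<Rightarrow> real" where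
  "survival_fun M v f z = v {\<omega>\<in>space M. z < f \<omega>}"

lemma choquet_aux_eq_survival_fun:
  "choquet_aux M v f y = y * v (space M) + (LBINT z:{y..}. survival_fun M v f z)"
  by (simp add: choquet_aux_def survival_fun_def)

lemma choquet_integrable_survival_fun:
  "choquet_integrable M v f \<Longrightarrow> set_integrable lborel {y..} (survival_fun M v f)"
  by (simp add: choquet_integrable_def survival_fun_def[abs_def])

lemma choquet_aux_tendsto_choquet:
  assumes "choquet_integrable M v f"
  shows "(choquet_aux M v f \<longlongrightarrow> choquet M v f) at_bot"
proof -
  obtain c where "(choquet_aux M v f \<longlongrightarrow> c) at_bot"
    using assms by (auto simp: choquet_integrable_def)
  then show ?thesis
    unfolding choquet_def using tendsto_Lim[OF trivial_limit_at_bot_linorder] by metis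
qed

lemma survival_fun_mono:
  assumes "nondecreasing_sf M v" "f \<in> borel_measurable M" "g \<in> borel_measurable M"
    and "\<And>\<omega>. \<omega> \<in> space M \<Longrightarrow> f \<omega> \<le> g \<omega>"
  shows "survival_fun M v f z \<le> survival_fun M v g z"
proof -
  have "{\<omega>\<in>space M. z < f \<omega>} \<in> sets M" "{\<omega>\<in>space M. z < g \<omega>} \<in> sets M"
    using assms(2,3) by measurable
  moreover have "{\<omega>\<in>space M. z < f \<omega>} \<subseteq> {\<omega>\<in>space M. z < g \<omega>}"
    using assms(4) by (auto intro: less_le_trans)
  ultimately show ?thesis
    using assms(1) unfolding nondecreasing_sf_def survival_fun_def by blast
qed

lemma survival_fun_tendsto:
  assumes "chain_gens M \<noteq> {}" "continuous_sf M v" "v {} = 0"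
    and meas: "\<And>n. fs n \<in> borel_measurable M" "f \<in> borel_measurable M"
    and inc: "\<And>\<omega> n. \<omega> \<in> space M \<Longrightarrow> fs n \<omega> \<le> fs (Suc n) \<omega>"
    and N: "v_null M v N" and lim: "\<And>\<omega>. \<omega> \<in> space M - N \<Longrightarrow> (\<lambda>n. fs n \<omega>) \<longlonglongrightarrow> f \<omega>"
  shows "(\<lambda>n. survival_fun M v (fs n) z) \<longlonglongrightarrow> survival_fun M v f z"
proof -
  define A where "A n = (space M - N) \<inter> {\<omega>\<in>space M. z < fs n \<omega>}" for n
  have level_sets: "{\<omega>\<in>space M. z < fs n \<omega>} \<in> sets M" "{\<omega>\<in>space M. z < f \<omega>} \<in> sets M" for n
    using meas by measurable
  have "N \<in> sets M" using N by (simp add: v_null_def)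
  then have "range A \<subseteq> sets M"
    using level_sets by (auto simp: A_def)
  moreover have "incseq A"
    using inc by (intro incseq_SucI) (auto simp: A_def intro: less_le_trans)
  moreover have "(\<Union>n. A n) = (space M - N) \<inter> {\<omega>\<in>space M. z < f \<omega>}"
  proof (intro equalityI subsetI)
    fix \<omega>
    assume "\<omega> \<in> (\<Union>n. A n)"
    then obtain n where \<omega>: "\<omega> \<in> space M - N" "z < fs n \<omega>" by (auto simp: A_def)
    have "fs n \<omega> \<le> f \<omega>"
      using incseq_le[OF incseq_SucI lim] inc \<omega>(1) by blast
    then show "\<omega> \<in> (space M - N) \<inter> {\<omega>\<in>space M. z < f \<omega>}"
      using \<omega> by auto
  next
    fix \<omega>
    assume \<omega>: "\<omega> \<in> (space M - N) \<inter> {\<omega>\<in>space M. z < f \<omega>}"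
    then have "eventually (\<lambda>n. z < fs n \<omega>) sequentially"
      using lim order_tendstoD(1) by blast
    then obtain n where "z < fs n \<omega>" by (auto simp: eventually_sequentially)
    then show "\<omega> \<in> (\<Union>n. A n)" using \<omega> by (auto simp: A_def)
  qed
  ultimately have "(\<lambda>n. v (A n)) \<longlonglongrightarrow> v ((space M - N) \<inter> {\<omega>\<in>space M. z < f \<omega>})"
    using continuous_sf_incseq[OF assms(1-3)] by metis
  moreover have "v (A n) = survival_fun M v (fs n) z" for n
    using N level_sets unfolding v_null_def A_def survival_fun_def by blast
  moreover have "v ((space M - N) \<inter> {\<omega>\<in>space M. z < f \<omega>}) = survival_fun M v f z"
    using N level_sets unfolding v_null_def survival_fun_def by blast
  ultimately show ?thesis by simp
qed

lemma choquet_aux_mono: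
  assumes "choquet_integrable M v f" "choquet_integrable M v g"
    and "\<And>z. survival_fun M v f z \<le> survival_fun M v g z"
  shows "choquet_aux M v f y \<le> choquet_aux M v g y"
  using set_integral_mono[OF assms(1,2)[THEN choquet_integrable_survival_fun]] assms(3)
  unfolding choquet_aux_eq_survival_fun by simp

lemma choquet_aux_diff_antimono:
  assumes f: "choquet_integrable M v f" and g: "choquet_integrable M v g"
    and le: "\<And>z. survival_fun M v f z \<le> survival_fun M v g z" and "y' \<le> y"
  shows "choquet_aux M v g y - choquet_aux M v f y \<le> choquet_aux M v g y' - choquet_aux M v f y'"
proof -
  note int = g[THEN choquet_integrable_survival_fun] f[THEN choquet_integrable_survival_fun]
  have diff: "choquet_aux M v g t - choquet_aux M v f t
      = (LBINT z:{t..}. survival_fun M v g z - survival_fun M v f z)" for t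
    using set_integral_diff(2)[OF int] unfolding choquet_aux_eq_survival_fun by simp
  show ?thesis
    unfolding diff using \<open>y' \<le> y\<close> le
    by (intro set_integral_mono_set set_integral_diff(1) int) auto
qed

theorem theorem9:
  fixes M :: "'a measure" and v :: "'a set \<Rightarrow> real"
    and fs :: "nat \<Rightarrow> 'a \<Rightarrow> real" and f :: "'a \<Rightarrow> real"
  assumes "chain_gens M \<noteq> {}"
    and "nondecreasing_sf M v" and "continuous_sf M v" and "v {} = 0"
    and "\<And>n. fs n \<in> borel_measurable M" and "f \<in> borel_measurable M"
    and "\<And>n. choquet_integrable M v (fs n)" and "choquet_integrable M v f"
    and "\<And>\<omega> n. \<omega> \<in> space M \<Longrightarrow> fs n \<omega> \<le> fs (Suc n) \<omega>"
    and "\<exists>N. v_null M v N \<and> (\<forall>\<omega>\<in>space M - N. (\<lambda>n. fs n \<omega>) \<longlonglongrightarrow> f \<omega>)"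
  shows "(\<lambda>n. choquet M v (fs n)) \<longlonglongrightarrow> choquet M v f"
proof -
  obtain N where N: "v_null M v N" and lim: "\<forall>\<omega>\<in>space M - N. (\<lambda>n. fs n \<omega>) \<longlonglongrightarrow> f \<omega>"
    using assms(10) by blast
  have surv_lim: "(\<lambda>n. survival_fun M v (fs n) z) \<longlonglongrightarrow> survival_fun M v f z" for z
    using survival_fun_tendsto[of M v fs f N, OF assms(1,3-6,9) N] lim by blast
  have surv_inc: "incseq (\<lambda>n. survival_fun M v (fs n) z)" for z
    using survival_fun_mono[OF assms(2,5,5) assms(9)] by (rule incseq_SucI)
  have surv_le: "survival_fun M v (fs n) z \<le> survival_fun M v f z" for n z
    using incseq_le[OF surv_inc surv_lim] .
  show ?thesis
  proof (rule LIMSEQ_of_at_bot_limits[where F="\<lambda>n. choquet_aux M v (fs n)" and G="choquet_aux M v f"])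
    show "(choquet_aux M v (fs n) \<longlongrightarrow> choquet M v (fs n)) at_bot" for n
      using assms(7) by (rule choquet_aux_tendsto_choquet)
    show "(choquet_aux M v f \<longlongrightarrow> choquet M v f) at_bot"
      using assms(8) by (rule choquet_aux_tendsto_choquet)
    show "choquet_aux M v (fs n) y \<le> choquet_aux M v f y" for n y
      using assms(7,8) surv_le by (rule choquet_aux_mono)
    show "choquet_aux M v (fs n) y - choquet_aux M v (fs 0) y
        \<le> choquet_aux M v (fs n) y' - choquet_aux M v (fs 0) y'" if "y' \<le> y" for n y y'
      using surv_inc by (intro choquet_aux_diff_antimono[OF assms(7,7) _ that]) (simp add: incseq_def)
    show "(\<lambda>n. choquet_aux M v (fs n) y) \<longlonglongrightarrow> choquet_aux M v f y" for y
      unfolding choquet_aux_eq_survival_fun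
      using assms(7,8)[THEN choquet_integrable_survival_fun] surv_inc surv_lim
      by (intro tendsto_add tendsto_const set_integral_incseq_tendsto)
  qed
qed

end
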